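(* Let $G'=(V,E')$ be the cycle graph of a cycle $C=(v_0,\ldots,v_{k-1})$ (so $V=V(C)$, $E'=\textnormal{ext}(C)$), and let $G=(V,E)$ with $E\subseteq E'$, so that $G'=G+F_G(C)$ where $F_G(C)=E'\setminus E$. Suppose $ax\ge b$ is facet-defining for $\textnormal{conv}(X(G'))$ with $a\ge 0$, and define $a'\in\mathbb{R}^{E^c}$ (where $E^c=\binom{V}{2}\setminus E$) by $a'_f=a_f$ if $f\in E^c\setminus F_G(C)$ and $a'_f=0$ otherwise. Then $$a'x\ \ge\ b\Big(\sum_{f\in F_G(C)}x_f-|F_G(C)|+1\Big)$$ is facet-defining for $\textnormal{conv}(X(G))$.
   Context: $\textnormal{ext}(C)=\{\{v_{i-1},v_i\}\}_{i=1}^{k-1}\cup\{\{v_{k-1},v_0\}\}$. For a graph $H=(V_H,E_H)$, $E^c(H)=\binom{V_H}{2}\setminus E_H$; for $x\in\{0,1\}^{E^c(H)}$, $E(x)=\{f:x_f=1\}$ and $X(H)=\{x\in\{0,1\}^{E^c(H)}:(V_H,E_H\cup E(x))\text{ is chordal}\}$; a graph is chordal if every cycle with at least four vertices has a chord. $G+F$ denotes $(V,E\cup F)$. *)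

theory Defs
  imports "HOL-Analysis.Analysis"
begin

text \<open>Edges are 2-element vertex sets. A cycle is given by a list of distinct vertices.\<close>

definition ext :: "'v list \<Rightarrow> 'v set set" where
  "ext C = {{C ! (i - 1), C ! i} | i. 1 \<le> i \<and> i < length C} \<union> {{C ! (length C - 1), C ! 0}}"

definition pairs :: "'v set \<Rightarrow> 'v set set" where
  "pairs V = {{u, w} | u w. u \<in> V \<and> w \<in> V \<and> u \<noteq> w}"

definition Ec :: "'v set \<Rightarrow> 'v set set \<Rightarrow> 'v set set" where
  "Ec V E = pairs V - E"

definition chordal :: "'v set \<Rightarrow> 'v set set \<Rightarrow> bool" where
  "chordal V E \<longleftrightarrow>
     (\<forall>ws. set ws \<subseteq> V \<and> distinct ws \<and> 4 \<le> length ws \<and> ext ws \<subseteq> E \<longrightarrow>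
        (\<exists>i j. i < length ws \<and> j < length ws \<and> i \<noteq> j \<and>
               {ws ! i, ws ! j} \<in> E \<and> {ws ! i, ws ! j} \<notin> ext ws))"

text \<open>Vectors in R^{E^c(H)} are represented as vectors in real^('v set) whose
  coordinates outside E^c(H) are zero.\<close>
definition Xset :: "'v::finite set \<Rightarrow> 'v set set \<Rightarrow> (real ^ ('v set)) set" where
  "Xset V E = {x. (\<forall>f. f \<notin> Ec V E \<longrightarrow> x $ f = 0) \<and> (\<forall>f \<in> Ec V E. x $ f \<in> {0, 1}) \<and>
                  chordal V (E \<union> {f \<in> Ec V E. x $ f = 1})}"

definition facet_defining ::
  "((real ^ 'n::finite) \<Rightarrow> real) \<Rightarrow> ((real ^ 'n) \<Rightarrow> real) \<Rightarrow> (real ^ 'n) set \<Rightarrow> bool" where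
  "facet_defining lhs rhs P \<longleftrightarrow>
     (\<forall>x \<in> P. lhs x \<ge> rhs x) \<and> {x \<in> P. lhs x = rhs x} facet_of P"

end

theory Submission
  imports Defs
begin

text \<open>
  Validity: for a chordal completion x of G in which every edge of F = ext C - E is
  present, x minus the indicator of F is a chordal completion of the cycle, so the lifted
  inequality follows from the given one; if some edge of F is missing the right-hand side is
  at most 0, while the left-hand side is nonnegative. For the dimension count, the tight face
  contains the facet of conv X(G'), shifted by the indicator of F, and for each f in F the
  completion that adds F - {f} and nothing else: the cycle minus one edge is a path, which is
  chordal. Each of these extra points lowers exactly one F-coordinate, so together they raise
  the dimension by |F|.
\<close>

section \<open>Edges of a cycle\<close>

lemma ext_conv_succ:
  assumes "ws \<noteq> []"
  shows "ext ws = {{ws ! i, ws ! (Suc i mod length ws)} | i. i < length ws}"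
    (is "_ = ?succ")
proof (intro equalityI subsetI)
  fix e assume "e \<in> ext ws"
  then consider i where "1 \<le> i" "i < length ws" "e = {ws ! (i - 1), ws ! i}"
    | "e = {ws ! (length ws - 1), ws ! 0}"
    unfolding ext_def by blast
  then show "e \<in> ?succ"
  proof cases
    case 1
    then show ?thesis by (intro CollectI exI[of _ "i - 1"]) auto
  next
    case 2
    then show ?thesis using assms by (intro CollectI exI[of _ "length ws - 1"]) auto
  qed
next
  fix e assume "e \<in> ?succ"
  then obtain i where i: "i < length ws" "e = {ws ! i, ws ! (Suc i mod length ws)}" by blast
  show "e \<in> ext ws"
  proof (cases "Suc i < length ws")
    case True
    then have "e \<in> {{ws ! (l - 1), ws ! l} | l. 1 \<le> l \<and> l < length ws}"
      using i by (intro CollectI exI[of _ "Suc i"]) simp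
    then show ?thesis unfolding ext_def by blast
  next
    case False
    then have "i = length ws - 1" using i(1) by linarith
    then have "Suc i = length ws" using assms by simp
    then have "e = {ws ! (length ws - 1), ws ! 0}" using i \<open>i = length ws - 1\<close> by simp
    then show ?thesis unfolding ext_def by blast
  qed
qed

lemma ext_succ_mem:
  assumes "i < length ws"
  shows "{ws ! i, ws ! (Suc i mod length ws)} \<in> ext ws"
proof -
  have "ws \<noteq> []" using assms by auto
  then show ?thesis using assms by (auto simp: ext_conv_succ)
qed

lemma ext_memE:
  assumes "e \<in> ext ws" "ws \<noteq> []"
  obtains i where "i < length ws" "e = {ws ! i, ws ! (Suc i mod length ws)}"
  using assms by (auto simp: ext_conv_succ)

lemma ext_vertex_mem:
  assumes "e \<in> ext ws" "v \<in> e" "ws \<noteq> []"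
  shows "v \<in> set ws"
  using assms by (auto elim!: ext_memE)

lemma ext_nth_memD:
  assumes "distinct ws" "i < length ws" "j < length ws" "{ws ! i, ws ! j} \<in> ext ws"
  shows "j = Suc i mod length ws \<or> i = Suc j mod length ws"
proof -
  obtain l where l: "l < length ws" "{ws ! i, ws ! j} = {ws ! l, ws ! (Suc l mod length ws)}"
    using assms(2,4) by (auto elim: ext_memE)
  have "0 < length ws" using l(1) by linarith
  then have "Suc l mod length ws < length ws" by simp
  then show ?thesis
    using l assms(1-3) by (auto simp: doubleton_eq_iff nth_eq_iff_index_eq)
qed

section \<open>Chordality of the cycle minus an edge and of almost complete graphs\<close>

text \<open>A vertex of least level has both cycle neighbours one level higher, so they coincide.\<close>
lemma no_cycle_with_unit_steps:
  fixes R :: "'v \<Rightarrow> nat"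
  assumes "distinct ws" "3 \<le> length ws" "inj_on R (set ws)"
    and steps: "\<And>u v. {u, v} \<in> ext ws \<Longrightarrow> R u = Suc (R v) \<or> R v = Suc (R u)"
  shows False
proof -
  define n where "n = length ws"
  have "Min (R ` set ws) \<in> R ` set ws" using assms(2) by (intro Min_in) auto
  then obtain m where m: "m < n" "R (ws ! m) = Min (R ` set ws)"
    unfolding n_def by (auto simp: in_set_conv_nth)
  have least: "R (ws ! m) \<le> R (ws ! i)" if "i < n" for i
    using that m(2) by (simp add: n_def)
  have above: "R (ws ! i) = Suc (R (ws ! m))" if "i < n" "{ws ! m, ws ! i} \<in> ext ws" for i
    using steps[OF that(2)] least[OF that(1)] by linarith
  define s where "s = Suc m mod n"
  define p where "p = (if m = 0 then n - 1 else m - 1)"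
  have sp: "s < n" "p < n" "s \<noteq> p" "Suc p mod n = m"
  proof -
    have "3 \<le> n" using assms(2) by (simp add: n_def)
    then show "s < n" "p < n" "s \<noteq> p" "Suc p mod n = m"
      using m(1) unfolding s_def p_def by (auto simp: mod_if)
  qed
  have "R (ws ! s) = R (ws ! p)"
    using above[of s] above[of p] ext_succ_mem[of m ws] ext_succ_mem[of p ws] sp m(1)
    unfolding s_def n_def by (simp add: insert_commute)
  then have "ws ! s = ws ! p"
    using assms(3) sp by (auto simp: n_def dest: inj_onD)
  then show False
    using sp assms(1) by (simp add: n_def nth_eq_iff_index_eq)
qed

text \<open>Numbering the vertices of C along the path that starts right after the removed edge.\<close>
lemma cycle_minus_edge_unit_steps:
  assumes "distinct C" "C \<noteq> []" "f \<in> ext C"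
  obtains R :: "'v \<Rightarrow> nat" where "inj_on R (set C)"
    and "\<And>u v. {u, v} \<in> ext C - {f} \<Longrightarrow> R u = Suc (R v) \<or> R v = Suc (R u)"
proof -
  define k where "k = length C"
  obtain j where j: "j < k" "f = {C ! j, C ! (Suc j mod k)}"
    using assms(2,3) unfolding k_def by (auto elim: ext_memE)
  define pos where "pos v = (THE t. t < k \<and> C ! t = v)" for v
  have pos: "pos (C ! t) = t" if "t < k" for t
    unfolding pos_def using that assms(1) by (auto simp: k_def nth_eq_iff_index_eq)
  define r where "r t = (if j < t then t - Suc j else t + k - Suc j)" for t
  define R where "R v = r (pos v)" for v
  have r_inj: "inj_on r {..<k}"
    using j(1) unfolding r_def by (auto intro!: inj_onI split: if_splits)
  have "inj_on R (set C)"
  proof (rule inj_onI)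
    fix u v assume "u \<in> set C" "v \<in> set C" "R u = R v"
    then obtain a b where "a < k" "b < k" "u = C ! a" "v = C ! b" "r a = r b"
      by (auto simp: in_set_conv_nth k_def R_def pos)
    with r_inj show "u = v" by (auto dest: inj_onD)
  qed
  moreover have "R u = Suc (R v) \<or> R v = Suc (R u)" if uv: "{u, v} \<in> ext C - {f}" for u v
  proof -
    obtain i where i: "i < k" "{u, v} = {C ! i, C ! (Suc i mod k)}"
      using ext_memE[of "{u, v}" C] uv assms(2) unfolding k_def by blast
    then have "i \<noteq> j" using uv j by auto
    then have "r (Suc i mod k) = Suc (r i)"
      using i(1) j(1) unfolding r_def by (auto simp: mod_if)
    then show ?thesis using i pos by (auto simp: R_def doubleton_eq_iff)
  qed
  ultimately show ?thesis using that by blast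
qed

lemma chordal_cycle_minus_edge:
  assumes "distinct C" "C \<noteq> []" "f \<in> ext C"
  shows "chordal V (ext C - {f})"
  unfolding chordal_def
proof (intro allI impI)
  fix ws :: "'a list"
  assume ws: "set ws \<subseteq> V \<and> distinct ws \<and> 4 \<le> length ws \<and> ext ws \<subseteq> ext C - {f}"
  obtain R :: "'a \<Rightarrow> nat" where R: "inj_on R (set C)"
    "\<And>u v. {u, v} \<in> ext C - {f} \<Longrightarrow> R u = Suc (R v) \<or> R v = Suc (R u)"
    using cycle_minus_edge_unit_steps[OF assms] by blast
  have "set ws \<subseteq> set C"
  proof
    fix v assume "v \<in> set ws"
    then obtain i where "i < length ws" "v = ws ! i" by (auto simp: in_set_conv_nth)
    then show "v \<in> set C"
      using ext_succ_mem[of i ws] ws assms(2) by (auto intro: ext_vertex_mem)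
  qed
  moreover have "R u = Suc (R v) \<or> R v = Suc (R u)" if "{u, v} \<in> ext ws" for u v
    using R(2) that ws by blast
  ultimately have False
    using ws no_cycle_with_unit_steps[of ws R] inj_on_subset[OF R(1)] by simp
  then show "\<exists>i j. i < length ws \<and> j < length ws \<and> i \<noteq> j \<and>
      {ws ! i, ws ! j} \<in> ext C - {f} \<and> {ws ! i, ws ! j} \<notin> ext ws" ..
qed

text \<open>Of the two diagonals of the first four vertices of a cycle at most one is the missing edge.\<close>
lemma chordal_if_almost_complete:
  assumes "pairs V - {c} \<subseteq> E"
  shows "chordal V E"
  unfolding chordal_def
proof (intro allI impI)
  fix ws :: "'a list"
  assume ws: "set ws \<subseteq> V \<and> distinct ws \<and> 4 \<le> length ws \<and> ext ws \<subseteq> E"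
  then have n: "4 \<le> length ws" and d: "distinct ws" by auto
  have diag: "{ws ! i, ws ! (i + 2)} \<in> pairs V" "{ws ! i, ws ! (i + 2)} \<notin> ext ws"
    if "i \<le> 1" for i
  proof -
    show "{ws ! i, ws ! (i + 2)} \<in> pairs V"
    proof -
      have "ws ! i \<in> V" "ws ! (i + 2) \<in> V" "ws ! i \<noteq> ws ! (i + 2)"
        using that n ws nth_mem[of i ws] nth_mem[of "i + 2" ws] by (auto simp: nth_eq_iff_index_eq)
      then show ?thesis unfolding pairs_def by blast
    qed
    show "{ws ! i, ws ! (i + 2)} \<notin> ext ws"
    proof
      assume "{ws ! i, ws ! (i + 2)} \<in> ext ws"
      moreover have "Suc (i + 2) mod length ws \<noteq> i"
      proof (cases "length ws = 4")
        case True
        then show ?thesis using that by presburger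
      qed (use that n in simp)
      moreover have "i \<noteq> Suc (Suc i) mod length ws" using that n by simp
      ultimately show False using ext_nth_memD[OF d, of i "i + 2"] that n by simp
    qed
  qed
  have diags_differ: "{ws ! 0, ws ! 2} \<noteq> {ws ! 1, ws ! 3}"
  proof
    assume "{ws ! 0, ws ! 2} = {ws ! 1, ws ! 3}"
    then have "ws ! 0 = ws ! 1 \<or> ws ! 0 = ws ! 3" by (auto simp: doubleton_eq_iff)
    moreover have "ws \<noteq> []" using n by auto
    ultimately show False
      using n nth_eq_iff_index_eq[OF d, of 0 1] nth_eq_iff_index_eq[OF d, of 0 3] by auto
  qed
  have "\<exists>i \<le> 1. {ws ! i, ws ! (i + 2)} \<noteq> c"
  proof (cases "{ws ! 0, ws ! 2} = c")
    case True
    then show ?thesis using diags_differ by (intro exI[of _ 1]) (simp add: numeral_3_eq_3)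
  qed (intro exI[of _ 0], simp add: numeral_2_eq_2)
  then obtain i where "i \<le> 1" "{ws ! i, ws ! (i + 2)} \<noteq> c" by blast
  then show "\<exists>i j. i < length ws \<and> j < length ws \<and> i \<noteq> j \<and>
      {ws ! i, ws ! j} \<in> E \<and> {ws ! i, ws ! j} \<notin> ext ws"
    using diag[of i] assms n by (intro exI[of _ i] exI[of _ "i + 2"]) auto
qed

section \<open>Affine dimension and faces in coordinate subspaces\<close>

definition indicator_vec :: "'a set \<Rightarrow> real ^ 'a" where
  "indicator_vec S = (\<chi> i. if i \<in> S then 1 else 0)"

lemma indicator_vec_nth [simp]: "indicator_vec S $ i = (if i \<in> S then 1 else 0)"
  by (simp add: indicator_vec_def)

definition coord_subspace :: "'a set \<Rightarrow> (real ^ 'a) set" where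
  "coord_subspace D = {x. \<forall>i. i \<notin> D \<longrightarrow> x $ i = 0}"

lemma subspace_coord_subspace: "subspace (coord_subspace D)"
  unfolding subspace_def coord_subspace_def by auto

lemma aff_dim_coord_subspace: "aff_dim (coord_subspace (D :: 'a::finite set)) = int (card D)"
proof -
  have "dim (coord_subspace D) = card D"
    unfolding coord_subspace_def dim_vec_eq[symmetric] by (rule dim_substandard_cart)
  then show ?thesis using aff_dim_subspace[OF subspace_coord_subspace[of D]] by simp
qed

lemma convex_hull_subset_coord_subspace:
  "X \<subseteq> coord_subspace D \<Longrightarrow> convex hull X \<subseteq> coord_subspace D"
  by (rule hull_minimal) (auto intro: subspace_imp_convex subspace_coord_subspace)

lemma aff_dim_convex_hull_le_card:
  "X \<subseteq> coord_subspace (D :: 'a::finite set) \<Longrightarrow> aff_dim (convex hull X) \<le> int (card D)"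
  using aff_dim_subset[OF convex_hull_subset_coord_subspace] aff_dim_coord_subspace by metis

text \<open>Each new point q i leaves the affine hull of everything before it, since it is the only
  one with coordinate i different from 1.\<close>
lemma aff_dim_Un_coordinate_drops:
  fixes S :: "(real ^ 'a) set" and q :: "'a \<Rightarrow> real ^ 'a"
  assumes "finite I"
    and "\<forall>s\<in>S. \<forall>i\<in>I. s $ i = 1"
    and "\<forall>i\<in>I. q i $ i = 0"
    and "\<forall>i\<in>I. \<forall>j\<in>I. j \<noteq> i \<longrightarrow> q j $ i = 1"
  shows "aff_dim (S \<union> q ` I) = aff_dim S + int (card I)"
  using assms
proof (induction I rule: finite_induct)
  case (insert i I)
  have "S \<union> q ` I \<subseteq> {x. x $ i = 1}"
    using insert.prems insert.hyps(2) by fastforce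
  then have "affine hull (S \<union> q ` I) \<subseteq> {x. x $ i = 1}"
    by (rule hull_minimal) (auto simp: affine_def simp flip: distrib_right)
  moreover have "q i $ i = 0" using insert.prems by simp
  ultimately have "q i \<notin> affine hull (S \<union> q ` I)" by force
  moreover have "S \<union> q ` insert i I = insert (q i) (S \<union> q ` I)" by auto
  ultimately show ?case using insert by (simp add: aff_dim_insert)
qed simp

lemma sum_coords_eq_inner:
  fixes x :: "real ^ 'a::finite"
  shows "(\<Sum>i\<in>D. c i * x $ i) = (\<chi> i. if i \<in> D then c i else 0) \<bullet> x"
  unfolding inner_vec_def by (simp add: if_distrib[of "\<lambda>t. t * _"] sum.If_cases cong: if_cong)

context
  fixes lhs rhs :: "real ^ 'n::finite \<Rightarrow> real" and w :: "real ^ 'n" and d :: real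
  assumes affine_difference: "\<And>x. lhs x - rhs x = w \<bullet> x - d"
begin

lemma valid_on_convex_hull:
  assumes "\<forall>x\<in>X. rhs x \<le> lhs x" "y \<in> convex hull X"
  shows "rhs y \<le> lhs y"
proof -
  have "X \<subseteq> {x. d \<le> w \<bullet> x}"
  proof
    fix x assume "x \<in> X"
    then have "rhs x \<le> lhs x" using assms(1) by blast
    then show "x \<in> {x. d \<le> w \<bullet> x}" using affine_difference[of x] by simp
  qed
  then have "convex hull X \<subseteq> {x. d \<le> w \<bullet> x}"
    by (rule hull_minimal) (rule convex_halfspace_ge)
  then show ?thesis using assms(2) affine_difference[of y] by auto
qed

lemma tight_face_of_convex_hull:
  assumes "\<forall>x\<in>X. rhs x \<le> lhs x"
  shows "{x \<in> convex hull X. lhs x = rhs x} face_of convex hull X"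
proof -
  have "{x \<in> convex hull X. lhs x = rhs x} = convex hull X \<inter> {x. w \<bullet> x = d}"
    using affine_difference by (auto simp: eq_iff_diff_eq_0 [of "lhs _"])
  also have "\<dots> face_of convex hull X"
    using valid_on_convex_hull[OF assms] affine_difference
    by (intro face_of_Int_supporting_hyperplane_ge convex_convex_hull) (metis diff_ge_0_iff_ge)
  finally show ?thesis .
qed

end

lemma facet_definingI:
  assumes "convex P" and valid: "\<forall>x\<in>P. rhs x \<le> lhs x"
    and face: "{x \<in> P. lhs x = rhs x} face_of P"
    and "y \<in> P" "lhs y \<noteq> rhs y" and "z \<in> P" "lhs z = rhs z"
    and dim: "aff_dim P - 1 \<le> aff_dim {x \<in> P. lhs x = rhs x}"
  shows "facet_defining lhs rhs P"
proof -
  have "{x \<in> P. lhs x = rhs x} \<noteq> P" using assms(4,5) by blast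
  then have "aff_dim {x \<in> P. lhs x = rhs x} < aff_dim P"
    by (rule face_of_aff_dim_lt[OF \<open>convex P\<close> face])
  then show ?thesis
    unfolding facet_defining_def facet_of_def using valid face dim assms(6,7) by auto
qed

lemma Xset_subset_coord_subspace: "Xset V E \<subseteq> coord_subspace (Ec V E)"
  unfolding Xset_def coord_subspace_def by auto

lemma Xset_coords_nonneg: "x \<in> Xset V E' \<Longrightarrow> 0 \<le> x $ f"
  unfolding Xset_def by (cases "f \<in> Ec V E'") auto

lemma indicator_vec_in_XsetI:
  assumes "S \<subseteq> Ec V E" "chordal V (E \<union> S)"
  shows "indicator_vec S \<in> Xset V E"
proof -
  have "{f \<in> Ec V E. indicator_vec S $ f = 1} = S" using assms(1) by auto
  then show ?thesis unfolding Xset_def using assms by auto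
qed

text \<open>The complete graph and the complete graphs minus one edge are chordal, so the
  completions of any graph contain a simplex of full dimension.\<close>
lemma aff_dim_convex_hull_Xset:
  fixes V :: "'v::finite set"
  shows "aff_dim (convex hull (Xset V E)) = int (card (Ec V E))"
proof (rule antisym)
  show "aff_dim (convex hull (Xset V E)) \<le> int (card (Ec V E))"
    by (rule aff_dim_convex_hull_le_card[OF Xset_subset_coord_subspace])
  let ?S = "{indicator_vec (Ec V E)} \<union> (\<lambda>c. indicator_vec (Ec V E - {c})) ` Ec V E"
  have "aff_dim ?S = int (card (Ec V E))"
    using aff_dim_Un_coordinate_drops[of "Ec V E" "{indicator_vec (Ec V E)}"] by simp
  moreover have "?S \<subseteq> Xset V E"
    by (auto intro!: indicator_vec_in_XsetI chordal_if_almost_complete simp: Ec_def)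
  then have "aff_dim ?S \<le> aff_dim (convex hull (Xset V E))"
    by (intro aff_dim_subset) (auto intro: hull_inc)
  ultimately show "int (card (Ec V E)) \<le> aff_dim (convex hull (Xset V E))" by simp
qed

section \<open>Lifting along the missing cycle edges\<close>

locale cycle_subgraph =
  fixes C :: "'v::finite list" and E :: "'v set set"
  assumes distinct: "distinct C" and length: "3 \<le> length C" and subgraph: "E \<subseteq> ext C"
begin

abbreviation F :: "'v set set" where "F \<equiv> ext C - E"

abbreviation chords :: "'v set set" where "chords \<equiv> Ec (set C) (ext C)"

lemma ext_subset_pairs: "ext C \<subseteq> pairs (set C)"
proof
  fix e assume "e \<in> ext C"
  then obtain i where i: "i < length C" "e = {C ! i, C ! (Suc i mod length C)}"
    using length by (auto elim: ext_memE)
  have succ: "Suc i mod length C < length C" by (rule mod_less_divisor) (use length in linarith)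
  have "Suc i mod length C \<noteq> i" using i(1) length by (auto simp: mod_if)
  then have "C ! i \<in> set C" "C ! (Suc i mod length C) \<in> set C"
    "C ! i \<noteq> C ! (Suc i mod length C)"
    using i(1) succ distinct by (auto simp: nth_eq_iff_index_eq)
  then show "e \<in> pairs (set C)" unfolding pairs_def i(2) by blast
qed

lemma Ec_eq_chords_Un_F: "Ec (set C) E = chords \<union> F" and chords_Int_F: "chords \<inter> F = {}"
  using ext_subset_pairs subgraph unfolding Ec_def by auto

lemma lift_mem_Xset:
  assumes x: "x \<in> Xset (set C) (ext C)"
  shows "indicator_vec F + x \<in> Xset (set C) E"
proof -
  let ?y = "indicator_vec F + x"
  have x0: "\<And>f. f \<notin> chords \<Longrightarrow> x $ f = 0" and "\<And>f. f \<in> chords \<Longrightarrow> x $ f \<in> {0, 1}"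
    and "chordal (set C) (ext C \<union> {f \<in> chords. x $ f = 1})"
    using x unfolding Xset_def by auto
  moreover have "E \<union> {f \<in> Ec (set C) E. ?y $ f = 1} = ext C \<union> {f \<in> chords. x $ f = 1}"
    using x0 subgraph chords_Int_F unfolding Ec_eq_chords_Un_F by auto
  ultimately show ?thesis
    unfolding Xset_def Ec_eq_chords_Un_F using chords_Int_F by auto
qed

lemma unlift_mem_Xset:
  assumes x: "x \<in> Xset (set C) E" and F1: "\<forall>f\<in>F. x $ f = 1"
  shows "x - indicator_vec F \<in> Xset (set C) (ext C)"
proof -
  let ?y = "x - indicator_vec F"
  have "\<And>f. f \<notin> chords \<union> F \<Longrightarrow> x $ f = 0"
    and "\<And>f. f \<in> chords \<union> F \<Longrightarrow> x $ f \<in> {0, 1}"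
    and "chordal (set C) (E \<union> {f \<in> chords \<union> F. x $ f = 1})"
    using x unfolding Xset_def Ec_eq_chords_Un_F by auto
  moreover have "E \<union> {f \<in> chords \<union> F. x $ f = 1} = ext C \<union> {f \<in> chords. ?y $ f = 1}"
    using F1 subgraph chords_Int_F by auto
  ultimately show ?thesis
    unfolding Xset_def using F1 chords_Int_F by auto
qed

lemma drop_one_mem_Xset:
  assumes "f \<in> F"
  shows "indicator_vec (F - {f}) \<in> Xset (set C) E"
proof (rule indicator_vec_in_XsetI)
  show "F - {f} \<subseteq> Ec (set C) E" unfolding Ec_eq_chords_Un_F by auto
  have "E \<union> (F - {f}) = ext C - {f}" using assms subgraph by auto
  moreover have "C \<noteq> []" using length by auto
  ultimately show "chordal (set C) (E \<union> (F - {f}))"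
    using chordal_cycle_minus_edge[OF distinct] assms by simp
qed

lemma lift_mem_convex_hull:
  assumes "x \<in> convex hull Xset (set C) (ext C)"
  shows "indicator_vec F + x \<in> convex hull Xset (set C) E"
proof -
  have "(+) (indicator_vec F) ` (convex hull Xset (set C) (ext C))
      = convex hull ((+) (indicator_vec F) ` Xset (set C) (ext C))"
    by (rule convex_hull_translation[symmetric])
  also have "\<dots> \<subseteq> convex hull Xset (set C) E"
    using lift_mem_Xset by (intro hull_mono) auto
  finally show ?thesis using assms by blast
qed

end

locale cycle_subgraph_facet = cycle_subgraph C E
  for C :: "'v::finite list" and E :: "'v set set" +
  fixes a :: "real ^ ('v set)" and b :: real
  assumes facet: "facet_defining (\<lambda>x. \<Sum>f\<in>Ec (set C) (ext C). a $ f * x $ f) (\<lambda>x. b)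
      (convex hull Xset (set C) (ext C))"
    and weights_nonneg: "\<forall>f\<in>Ec (set C) (ext C). 0 \<le> a $ f"
begin

definition lhs :: "real ^ ('v set) \<Rightarrow> real" where
  "lhs x = (\<Sum>f\<in>chords. a $ f * x $ f)"

definition rhs :: "real ^ ('v set) \<Rightarrow> real" where
  "rhs x = b * ((\<Sum>f\<in>F. x $ f) - real (card F) + 1)"

lemma lhs_restricted_weights:
  "(\<lambda>x. \<Sum>f\<in>Ec (set C) E. (\<chi> f. if f \<in> Ec (set C) E - F then a $ f else 0) $ f * x $ f) = lhs"
proof
  fix x :: "real ^ ('v set)"
  have "Ec (set C) E - F = chords" using Ec_eq_chords_Un_F chords_Int_F by blast
  then have "(\<Sum>f\<in>Ec (set C) E. (\<chi> f. if f \<in> Ec (set C) E - F then a $ f else 0) $ f * x $ f)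
      = (\<Sum>f\<in>chords \<union> F. if f \<in> chords then a $ f * x $ f else 0)"
    unfolding Ec_eq_chords_Un_F by (intro sum.cong) auto
  also have "\<dots> = lhs x"
    unfolding lhs_def by (simp add: sum.If_cases Int_absorb2)
  finally show "(\<Sum>f\<in>Ec (set C) E. (\<chi> f. if f \<in> Ec (set C) E - F then a $ f else 0) $ f * x $ f)
      = lhs x" .
qed

lemma lhs_nonneg: "\<forall>f\<in>chords. 0 \<le> x $ f \<Longrightarrow> 0 \<le> lhs x"
  unfolding lhs_def using weights_nonneg by (intro sum_nonneg mult_nonneg_nonneg) auto

lemma lhs_translate_F: "lhs (indicator_vec F + x) = lhs x"
  unfolding lhs_def using chords_Int_F by (intro sum.cong) auto

lemma rhs_translate_F:
  assumes "x \<in> coord_subspace chords"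
  shows "rhs (indicator_vec F + x) = b"
proof -
  have "(\<Sum>f\<in>F. (indicator_vec F + x) $ f) = (\<Sum>f\<in>F. 1)"
    using assms chords_Int_F unfolding coord_subspace_def by (intro sum.cong) auto
  then show ?thesis unfolding rhs_def by simp
qed

lemma lhs_minus_rhs_eq_inner:
  "lhs x - rhs x
     = ((\<chi> f. if f \<in> chords then a $ f else 0) - b *\<^sub>R indicator_vec F) \<bullet> x
       - b * (1 - real (card F))"
proof -
  have "(\<Sum>f\<in>F. x $ f) = (\<Sum>f\<in>F. 1 * x $ f)" by simp
  then show ?thesis
    unfolding lhs_def rhs_def sum_coords_eq_inner inner_diff_left
    by (simp add: indicator_vec_def algebra_simps)
qed

lemma facet_lhs: "facet_defining lhs (\<lambda>x. b) (convex hull Xset (set C) (ext C))"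
  using facet unfolding lhs_def[abs_def] .

lemma b_nonneg: "0 \<le> b"
proof -
  obtain z where z: "z \<in> convex hull Xset (set C) (ext C)" "lhs z = b"
    using facet_lhs unfolding facet_defining_def facet_of_def by blast
  have "\<forall>x\<in>Xset (set C) (ext C). 0 \<le> lhs x"
    using lhs_nonneg Xset_coords_nonneg by blast
  then have "0 \<le> lhs z"
    using valid_on_convex_hull[of lhs "\<lambda>_. 0" "\<chi> f. if f \<in> chords then a $ f else 0" 0] z(1)
    by (simp add: lhs_def sum_coords_eq_inner)
  with z(2) show ?thesis by simp
qed

lemma valid_on_Xset:
  assumes x: "x \<in> Xset (set C) E"
  shows "rhs x \<le> lhs x"
proof (cases "\<forall>f\<in>F. x $ f = 1")
  case True
  then have "x - indicator_vec F \<in> convex hull Xset (set C) (ext C)"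
    using unlift_mem_Xset[OF x] by (simp add: hull_inc)
  then have "b \<le> lhs (x - indicator_vec F)"
    using facet_lhs unfolding facet_defining_def by blast
  moreover have "lhs (x - indicator_vec F) = lhs x"
    using lhs_translate_F[of "x - indicator_vec F"] by simp
  moreover have "rhs x = b" unfolding rhs_def using True by simp
  ultimately show ?thesis by simp
next
  case False
  then obtain g where g: "g \<in> F" "x $ g \<noteq> 1" by blast
  have x01: "x $ f \<in> {0, 1}" if "f \<in> F" for f
    using x that unfolding Xset_def Ec_eq_chords_Un_F by auto
  then have "x $ g = 0" using g by auto
  then have "(\<Sum>f\<in>F. x $ f) = (\<Sum>f\<in>F - {g}. x $ f)"
    using g(1) by (simp add: sum.remove)
  also have "\<dots> \<le> (\<Sum>f\<in>F - {g}. 1)"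
    using x01 by (intro sum_mono) fastforce
  also have "\<dots> = real (card F) - 1"
  proof -
    have "0 < card F" using g(1) by (auto simp: card_gt_0_iff)
    then show ?thesis using g(1) by (simp add: card_Diff_singleton of_nat_diff)
  qed
  finally have "rhs x \<le> 0"
    unfolding rhs_def using b_nonneg by (simp add: mult_nonneg_nonpos)
  also have "0 \<le> lhs x"
    using lhs_nonneg Xset_coords_nonneg[OF x] by blast
  finally show ?thesis .
qed

lemma lift_tight_faces:
  "(+) (indicator_vec F) ` {x \<in> convex hull Xset (set C) (ext C). lhs x = b}
     \<subseteq> {y \<in> convex hull Xset (set C) E. lhs y = rhs y}"
proof (rule image_subsetI)
  fix x assume x: "x \<in> {x \<in> convex hull Xset (set C) (ext C). lhs x = b}"
  then have "x \<in> coord_subspace chords"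
    using convex_hull_subset_coord_subspace[OF Xset_subset_coord_subspace] by blast
  then show "indicator_vec F + x \<in> {y \<in> convex hull Xset (set C) E. lhs y = rhs y}"
    using x lift_mem_convex_hull lhs_translate_F rhs_translate_F by simp
qed

lemma drop_one_mem_tight_face:
  assumes "f \<in> F"
  shows "indicator_vec (F - {f}) \<in> {y \<in> convex hull Xset (set C) E. lhs y = rhs y}"
proof -
  have "lhs (indicator_vec (F - {f})) = 0"
    unfolding lhs_def using chords_Int_F by (intro sum.neutral) auto
  moreover have "(\<Sum>g\<in>F. indicator_vec (F - {f}) $ g) = real (card F) - 1"
  proof -
    have "(\<Sum>g\<in>F. indicator_vec (F - {f}) $ g) = real (card (F - {f}))"
    proof -
      have "F \<inter> {g. g \<noteq> f} = F - {f}" by blast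
      then show ?thesis by (simp add: sum.If_cases)
    qed
    moreover have "0 < card F" using assms by (auto simp: card_gt_0_iff)
    ultimately show ?thesis using assms by (simp add: card_Diff_singleton of_nat_diff)
  qed
  ultimately have "lhs (indicator_vec (F - {f})) = rhs (indicator_vec (F - {f}))"
    by (simp add: rhs_def)
  then show ?thesis
    using drop_one_mem_Xset[OF assms] by (simp add: hull_inc)
qed

lemma aff_dim_tight_face:
  "aff_dim (convex hull Xset (set C) E) - 1
     \<le> aff_dim {x \<in> convex hull Xset (set C) E. lhs x = rhs x}"
proof -
  let ?face' = "{x \<in> convex hull Xset (set C) (ext C). lhs x = b}"
  let ?T = "(+) (indicator_vec F) ` ?face'"
  let ?q = "\<lambda>f. indicator_vec (F - {f})"
  have "?face' facet_of convex hull Xset (set C) (ext C)"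
    using facet_lhs unfolding facet_defining_def by blast
  then have face'_dim: "aff_dim ?face' = int (card chords) - 1"
    unfolding facet_of_def aff_dim_convex_hull_Xset by blast
  have face'_coords: "?face' \<subseteq> coord_subspace chords"
    using convex_hull_subset_coord_subspace[OF Xset_subset_coord_subspace] by blast
  have "\<forall>s\<in>?T. \<forall>f\<in>F. s $ f = 1"
  proof (intro ballI)
    fix s f assume s: "s \<in> ?T" and f: "f \<in> F"
    obtain x where x: "x \<in> ?face'" "s = indicator_vec F + x"
      using s by (auto simp del: vector_add_component)
    then have "x $ f = 0"
      using face'_coords chords_Int_F f unfolding coord_subspace_def by auto
    then show "s $ f = 1" using x(2) f by simp
  qed
  then have "aff_dim (?T \<union> ?q ` F) = aff_dim ?T + int (card F)"
    by (intro aff_dim_Un_coordinate_drops) auto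
  also have "\<dots> = aff_dim (convex hull Xset (set C) E) - 1"
    using face'_dim aff_dim_convex_hull_Xset[of "set C" E] chords_Int_F
    by (simp add: aff_dim_translation_eq Ec_eq_chords_Un_F card_Un_disjoint)
  finally have dim_eq: "aff_dim (?T \<union> ?q ` F) = aff_dim (convex hull Xset (set C) E) - 1" .
  have "?T \<union> ?q ` F \<subseteq> {x \<in> convex hull Xset (set C) E. lhs x = rhs x}"
    using lift_tight_faces drop_one_mem_tight_face by blast
  then have "aff_dim (?T \<union> ?q ` F) \<le> aff_dim {x \<in> convex hull Xset (set C) E. lhs x = rhs x}"
    by (rule aff_dim_subset)
  with dim_eq show ?thesis by linarith
qed

theorem facet_defining_lift:
  "facet_defining lhs rhs (convex hull Xset (set C) E)"
proof -
  note affine = lhs_minus_rhs_eq_inner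
  let ?face' = "{x \<in> convex hull Xset (set C) (ext C). lhs x = b}"
  have facet': "?face' facet_of convex hull Xset (set C) (ext C)"
    using facet_lhs unfolding facet_defining_def by blast
  have "?face' \<noteq> {}" and "aff_dim ?face' \<noteq> aff_dim (convex hull Xset (set C) (ext C))"
    using facet' by (simp_all add: facet_of_def)
  then obtain z where z: "z \<in> ?face'" by blast
  have "?face' \<noteq> convex hull Xset (set C) (ext C)"
    using \<open>aff_dim ?face' \<noteq> _\<close> by metis
  then obtain y where y: "y \<in> convex hull Xset (set C) (ext C)" "lhs y \<noteq> b" by blast
  have "y \<in> coord_subspace chords"
    using y(1) convex_hull_subset_coord_subspace[OF Xset_subset_coord_subspace] by blast
  then have y_off: "lhs (indicator_vec F + y) \<noteq> rhs (indicator_vec F + y)"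
    using \<open>lhs y \<noteq> b\<close> lhs_translate_F rhs_translate_F by simp
  have "indicator_vec F + z \<in> {x \<in> convex hull Xset (set C) E. lhs x = rhs x}"
    using z lift_tight_faces by blast
  then have z_mem: "indicator_vec F + z \<in> convex hull Xset (set C) E"
    and z_on: "lhs (indicator_vec F + z) = rhs (indicator_vec F + z)"
    by simp_all
  have valid: "\<forall>x\<in>convex hull Xset (set C) E. rhs x \<le> lhs x"
    using valid_on_convex_hull[OF affine] valid_on_Xset by blast
  have face: "{x \<in> convex hull Xset (set C) E. lhs x = rhs x} face_of convex hull Xset (set C) E"
    using tight_face_of_convex_hull[OF affine] valid_on_Xset by blast
  show ?thesis
    by (rule facet_definingI[OF convex_convex_hull valid face lift_mem_convex_hull[OF y(1)]
          y_off z_mem z_on aff_dim_tight_face])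
qed

end

theorem theorem3:
  fixes C :: "'v::finite list" and E :: "'v set set"
    and a :: "real ^ ('v set)" and b :: real
  assumes "distinct C" and "3 \<le> length C"
    and "E \<subseteq> ext C"
    and "facet_defining (\<lambda>x. \<Sum>f \<in> Ec (set C) (ext C). a $ f * x $ f) (\<lambda>x. b)
           (convex hull (Xset (set C) (ext C)))"
    and "\<forall>f \<in> Ec (set C) (ext C). a $ f \<ge> 0"
  shows "let F = ext C - E;
             a' = (\<chi> f. if f \<in> Ec (set C) E - F then a $ f else 0)
         in facet_defining (\<lambda>x. \<Sum>f \<in> Ec (set C) E. a' $ f * x $ f)
              (\<lambda>x. b * ((\<Sum>f \<in> F. x $ f) - real (card F) + 1))
              (convex hull (Xset (set C) E))"
proof -
  interpret cycle_subgraph_facet C E a b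
    using assms by unfold_locales
  show ?thesis
    unfolding Let_def lhs_restricted_weights rhs_def[abs_def, symmetric]
    by (rule facet_defining_lift)
qed

end
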